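(* The Mathew–Nadkarni transformation $T_\phi$ on $[0,1)\times\mathbb{Z}_2$ with the measure $m\otimes h$ is $\tfrac12$-rigid: there is a sequence of integers $(n_k)$ such that $\liminf_{k\to\infty}(m\otimes h)(T_\phi^{n_k}B\cap B)\geq\tfrac12 (m\otimes h)(B)$ for every Borel set $B\subset[0,1)\times\mathbb{Z}_2$.
   Context: $m$ is Lebesgue measure on $[0,1)$, $\mathbb{Z}_2=\{0,1\}$ with Haar measure $h=\tfrac12\delta_0+\tfrac12\delta_1$. $T:[0,1)\to[0,1)$ is the von Neumann–Kakutani adding machine (odometer), defined by mapping each interval $[1-2^{-n},1-2^{-(n+1)})$ linearly (by translation) onto $[2^{-(n+1)},2^{-n})$, $n=0,1,2,\dots$. The cocycle $\phi:[0,1)\to\mathbb{Z}_2$ is defined to be $0$ on the intervals $[1-2^{-n},1-2^{-n}+2^{-(n+2)})$ and $1$ on the intervals $[1-2^{-n}+2^{-(n+2)},1-2^{-(n+1)})$, $n=0,1,2,\dots$. The Mathew–Nadkarni transformation is the skew product $T_\phi(x,g)=(Tx,\phi(x)+g)$ (addition mod 2), which preserves $m\otimes h$; it is known (Mathew–Nadkarni) to have spectrum consisting of a Lebesgue component of multiplicity 2 together with a discrete component. *)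

theory Defs
  imports "HOL-Probability.Probability"
begin

text \<open>Index n of the interval [1 - 2^(-n), 1 - 2^(-(n+1))) containing x in [0,1).\<close>
definition odo_level :: "real \<Rightarrow> nat" where
  "odo_level x = nat \<lfloor>- log 2 (1 - x)\<rfloor>"

text \<open>Von Neumann--Kakutani adding machine: translate
  [1 - 2^(-n), 1 - 2^(-(n+1))) onto [2^(-(n+1)), 2^(-n)).  Outside [0,1) it is the identity
  (irrelevant convention).\<close>
definition odometer :: "real \<Rightarrow> real" where
  "odometer x = (if 0 \<le> x \<and> x < 1
      then x - (1 - (1/2) ^ odo_level x) + (1/2) ^ (Suc (odo_level x))
      else x)"

text \<open>The cocycle phi into Z_2 (Z_2 modelled as bool, True = 1, addition = xor).\<close>
definition mn_cocycle :: "real \<Rightarrow> bool" where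
  "mn_cocycle x = (if 0 \<le> x \<and> x < 1
      then \<not> (x < 1 - (1/2) ^ odo_level x + (1/2) ^ (odo_level x + 2))
      else False)"

definition mathew_nadkarni :: "real \<times> bool \<Rightarrow> real \<times> bool" where
  "mathew_nadkarni p = (odometer (fst p), mn_cocycle (fst p) \<noteq> snd p)"

definition haar_Z2 :: "bool measure" where
  "haar_Z2 = measure_pmf (pmf_of_set UNIV)"

definition mn_measure :: "(real \<times> bool) measure" where
  "mn_measure = restrict_space lborel {0..<1} \<Otimes>\<^sub>M haar_Z2"

end

theory Submission
  imports Defs
begin

text \<open>The power \<open>T^(2^N)\<close> of the odometer maps every dyadic interval of length \<open>2^-N\<close> into
  itself and preserves Lebesgue measure, while \<open>T_\<phi>^(2^N)\<close> flips the \<open>\<int>\<^sub>2\<close>-coordinate according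
  to the cocycle sum of \<open>\<phi>\<close> along \<open>2^N\<close> steps. A self-similarity computation shows that for
  \<open>N \<ge> 1\<close> this sum vanishes on exactly half of each dyadic interval of level \<open>N\<close>. Approximating
  both fibres of a Borel set \<open>B\<close> by finite unions of dyadic intervals, \<open>T_\<phi>^(2^N)\<close> thus returns
  half of the measure of \<open>B\<close> into \<open>B\<close>, up to an error that vanishes as \<open>N \<rightarrow> \<infinity>\<close>; hence
  \<open>n\<^sub>k = 2^(k+1)\<close> works.\<close>

section \<open>The odometer on dyadic intervals\<close>

lemma half_power_eq_powr: "(1/2::real) ^ n = 2 powr (- real n)"
  by (simp add: powr_minus powr_realpow power_one_over inverse_eq_divide)

lemma odo_level_eqI:
  assumes "1 - (1/2) ^ n \<le> y" "y < 1 - (1/2::real) ^ Suc n"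
  shows "odo_level y = n"
proof -
  have "(1/2::real) ^ Suc n < 1 - y" "1 - y \<le> (1/2) ^ n" using assms by auto
  moreover have "0 < 1 - y" using assms(2) zero_less_power[of "1/2::real" "Suc n"] by linarith
  ultimately have "- real (Suc n) < log 2 (1 - y)" "log 2 (1 - y) \<le> - real n"
    unfolding half_power_eq_powr by (simp_all add: less_log_iff log_le_iff del: of_nat_Suc)
  then have "\<lfloor>- log 2 (1 - y)\<rfloor> = int n" by (simp add: floor_eq_iff)
  then show ?thesis unfolding odo_level_def by simp
qed

lemma odo_level_bounds:
  assumes "0 \<le> y" "y < (1::real)"
  shows "1 - (1/2) ^ odo_level y \<le> y" "y < 1 - (1/2) ^ Suc (odo_level y)"
proof -
  define t where "t = - log 2 (1 - y)"
  have t: "0 \<le> t" "1 - y = 2 powr (- t)" unfolding t_def using assms by simp_all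
  then have "real (odo_level y) = of_int \<lfloor>t\<rfloor>" unfolding odo_level_def t_def[symmetric] by simp
  then have "real (odo_level y) \<le> t" "t < real (Suc (odo_level y))" by linarith+
  then have "2 powr (- t) \<le> 2 powr (- real (odo_level y))"
    "2 powr (- real (Suc (odo_level y))) < 2 powr (- t)"
    by (intro powr_mono powr_less_mono; simp)+
  then show "1 - (1/2) ^ odo_level y \<le> y" "y < 1 - (1/2) ^ Suc (odo_level y)"
    using t(2) unfolding half_power_eq_powr by linarith+
qed

lemma odometer_eq:
  "0 \<le> y \<Longrightarrow> y < 1 \<Longrightarrow> odometer y = y - 1 + (1/2) ^ odo_level y + (1/2) ^ Suc (odo_level y)"
  unfolding odometer_def by simp

lemma odometer_bounds:
  assumes "0 \<le> y" "y < (1::real)"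
  shows "(1/2) ^ Suc (odo_level y) \<le> odometer y" "odometer y < (1/2) ^ odo_level y"
  using odo_level_bounds[OF assms] odometer_eq[OF assms] by auto

lemma odometer_in_unit:
  assumes "0 \<le> y" "y < (1::real)"
  shows "0 < odometer y" "odometer y < 1"
  using odometer_bounds[OF assms] zero_less_power[of "1/2::real" "Suc (odo_level y)"]
    power_le_one[of "1/2::real" "odo_level y"] by linarith+

lemma odo_level_half: "0 \<le> y \<Longrightarrow> y < (1::real) \<Longrightarrow> odo_level (y/2) = 0"
  by (rule odo_level_eqI) auto

lemma odo_level_half_shift:
  "0 \<le> y \<Longrightarrow> y < (1::real) \<Longrightarrow> odo_level ((1 + y)/2) = Suc (odo_level y)"
  using odo_level_bounds by (intro odo_level_eqI) auto

lemma odometer_half: "0 \<le> y \<Longrightarrow> y < (1::real) \<Longrightarrow> odometer (y/2) = (1 + y)/2"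
  using odometer_eq[of "y/2"] odo_level_half[of y] by auto

lemma odometer_half_shift:
  "0 \<le> y \<Longrightarrow> y < (1::real) \<Longrightarrow> odometer ((1 + y)/2) = odometer y / 2"
  using odometer_eq[of "(1 + y)/2"] odo_level_half_shift odometer_eq[of y] by auto

lemma mn_cocycle_half: "0 \<le> y \<Longrightarrow> y < (1::real) \<Longrightarrow> mn_cocycle (y/2) = (1/2 \<le> y)"
  unfolding mn_cocycle_def using odo_level_half[of y] by auto

lemma mn_cocycle_half_shift:
  "0 \<le> y \<Longrightarrow> y < (1::real) \<Longrightarrow> mn_cocycle ((1 + y)/2) = mn_cocycle y"
  unfolding mn_cocycle_def using odo_level_half_shift by auto

lemma half_le_odometer_iff:
  assumes "0 \<le> y" "y < (1::real)"
  shows "(1/2 \<le> odometer y) = (y < 1/2)"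
proof (cases "y < 1/2")
  case True
  then show ?thesis using odometer_half[of "2*y"] assms by auto
next
  case False
  then have "odometer y = odometer (2*y - 1) / 2" using odometer_half_shift[of "2*y - 1"] assms by auto
  then show ?thesis using odometer_in_unit[of "2*y - 1"] False assms by auto
qed

lemma odometer_odometer_digit:
  assumes "0 \<le> y" "y < (1::real)" "b < (2::nat)"
  shows "odometer (odometer ((real b + y)/2)) = (real b + odometer y)/2"
proof -
  have "b = 0 \<or> b = 1" using assms(3) by auto
  then show ?thesis
  proof
    assume "b = 0"
    then show ?thesis using assms by (simp add: odometer_half odometer_half_shift)
  next
    assume "b = 1"
    then show ?thesis using assms odometer_in_unit[OF assms(1,2)]
      by (simp add: odometer_half odometer_half_shift)
  qed
qed

lemma dyadic_digit_split:
  "(real a + y) / 2 ^ Suc k = (real (a div 2) + (real (a mod 2) + y)/2) / 2 ^ k"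
proof -
  have "real a = 2 * real (a div 2) + real (a mod 2)"
    by (metis of_nat_add of_nat_mult of_nat_numeral div_mult_mod_eq mult.commute)
  then show ?thesis by (simp add: field_simps)
qed

text \<open>The odometer adds one to the leading binary digit and carries to the right, so \<open>T^(2^k)\<close>
  keeps the first \<open>k\<close> digits and acts as \<open>T\<close> on the remaining ones.\<close>
lemma funpow_odometer_dyadic:
  "a < 2 ^ k \<Longrightarrow> 0 \<le> y \<Longrightarrow> y < 1 \<Longrightarrow>
   (odometer ^^ 2 ^ k) ((real a + y) / 2 ^ k) = (real a + odometer y) / 2 ^ k"
proof (induction k arbitrary: a y)
  case (Suc k)
  define w where "w = (real (a mod 2) + y) / 2"
  have a: "a div 2 < 2 ^ k" using Suc.prems(1) by auto
  have w: "0 \<le> w" "w < 1" using Suc.prems unfolding w_def by auto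
  have Tw: "0 \<le> odometer w" "odometer w < 1" using odometer_in_unit[OF w] by auto
  have "(odometer ^^ 2 ^ Suc k) ((real a + y) / 2 ^ Suc k)
      = (odometer ^^ (2 ^ k + 2 ^ k)) ((real (a div 2) + w) / 2 ^ k)"
    unfolding w_def dyadic_digit_split by (simp add: mult_2)
  also have "\<dots> = (odometer ^^ 2 ^ k) ((odometer ^^ 2 ^ k) ((real (a div 2) + w) / 2 ^ k))"
    by (simp only: funpow_add comp_apply)
  also have "\<dots> = (real (a div 2) + odometer (odometer w)) / 2 ^ k"
    using Suc.IH[OF a w] Suc.IH[OF a Tw] by simp
  also have "\<dots> = (real a + odometer y) / 2 ^ Suc k"
    unfolding w_def dyadic_digit_split[of a "odometer y"]
    using odometer_odometer_digit Suc.prems by simp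
  finally show ?case .
qed simp

section \<open>Cocycle sums\<close>

fun mn_cocycle_sum :: "nat \<Rightarrow> real \<Rightarrow> bool" where
  "mn_cocycle_sum 0 x = False"
| "mn_cocycle_sum (Suc n) x = (mn_cocycle_sum n x \<noteq> mn_cocycle ((odometer ^^ n) x))"

lemma funpow_mathew_nadkarni:
  "(mathew_nadkarni ^^ n) (x, g) = ((odometer ^^ n) x, g \<noteq> mn_cocycle_sum n x)"
  by (induction n) (auto simp: mathew_nadkarni_def)

lemma mn_cocycle_sum_add:
  "mn_cocycle_sum (m + n) x = (mn_cocycle_sum m x \<noteq> mn_cocycle_sum n ((odometer ^^ m) x))"
proof (induction n)
  case (Suc n)
  have "(odometer ^^ (m + n)) x = (odometer ^^ n) ((odometer ^^ m) x)"
    by (metis add.commute comp_apply funpow_add)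
  then show ?case using Suc by auto
qed simp

definition mn_gamma :: "real \<Rightarrow> bool" where
  "mn_gamma y = (mn_cocycle y \<noteq> (1/2 \<le> y))"

lemma mn_cocycle_sum_two:
  assumes "0 \<le> y" "y < (1::real)" "b < (2::nat)"
  shows "mn_cocycle_sum 2 ((real b + y)/2) = (mn_gamma y \<noteq> (b = 1))"
proof -
  have sum2: "mn_cocycle_sum 2 x = (mn_cocycle x \<noteq> mn_cocycle (odometer x))" for x
    by (simp add: numeral_2_eq_2)
  have "b = 0 \<or> b = 1" using assms by auto
  then show ?thesis
  proof
    assume "b = 0"
    then show ?thesis using assms
      by (simp add: odometer_half mn_cocycle_half mn_cocycle_half_shift sum2 mn_gamma_def) blast
  next
    assume "b = 1"
    moreover have "0 \<le> odometer y" "odometer y < 1" using odometer_in_unit[OF assms(1,2)] by auto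
    moreover have "(1 \<le> odometer y * 2) = (\<not> 1 \<le> y * 2)" using half_le_odometer_iff[OF assms(1,2)] by auto
    ultimately show ?thesis using assms
      by (simp add: odometer_half_shift mn_cocycle_half_shift mn_cocycle_half sum2 mn_gamma_def)
  qed
qed

lemma mn_gamma_odometer_digit:
  assumes "0 \<le> y" "y < (1::real)" "b < (2::nat)"
  shows "(mn_gamma ((real b + y)/2) \<noteq> mn_gamma (odometer ((real b + y)/2))) = (mn_gamma y = (b = 1))"
proof -
  have "b = 0 \<or> b = 1" using assms by auto
  then show ?thesis
  proof
    assume "b = 0"
    moreover have "\<not> 1/2 \<le> y/2" "1/2 \<le> (1 + y)/2" using assms by auto
    ultimately show ?thesis using assms
      by (simp add: odometer_half mn_cocycle_half mn_cocycle_half_shift mn_gamma_def) blast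
  next
    assume "b = 1"
    moreover have "0 \<le> odometer y" "odometer y < 1" using odometer_in_unit[OF assms(1,2)] by auto
    moreover have "(1 \<le> odometer y * 2) = (\<not> 1 \<le> y * 2)" using half_le_odometer_iff[OF assms(1,2)] by auto
    moreover have "1/2 \<le> (1 + y)/2" using assms by auto
    ultimately show ?thesis using assms
      by (simp add: odometer_half_shift mn_cocycle_half_shift mn_cocycle_half mn_gamma_def)
  qed
qed

lemma mn_cocycle_sum_dyadic:
  "a < 2 ^ Suc k \<Longrightarrow> 0 \<le> y \<Longrightarrow> y < 1 \<Longrightarrow>
   mn_cocycle_sum (2 ^ Suc k) ((real a + y) / 2 ^ Suc k) = (mn_gamma y \<noteq> (odd a \<noteq> (1 \<le> k)))"
proof (induction k arbitrary: a y)
  case 0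
  then have "a < 2" "(a = 1) = odd a" by (auto simp: less_2_cases_iff)
  then show ?case using mn_cocycle_sum_two[OF 0(2,3), of a] by simp
next
  case (Suc k)
  define w where "w = (real (a mod 2) + y) / 2"
  have a: "a div 2 < 2 ^ Suc k" using Suc.prems(1) by auto
  have w: "0 \<le> w" "w < 1" using Suc.prems unfolding w_def by auto
  have Tw: "0 \<le> odometer w" "odometer w < 1" using odometer_in_unit[OF w] by auto
  let ?x = "(real (a div 2) + w) / 2 ^ Suc k"
  have "mn_cocycle_sum (2 ^ Suc (Suc k)) ((real a + y) / 2 ^ Suc (Suc k))
      = (mn_cocycle_sum (2 ^ Suc k) ?x \<noteq> mn_cocycle_sum (2 ^ Suc k) ((odometer ^^ 2 ^ Suc k) ?x))"
    unfolding w_def dyadic_digit_split[of a y] by (metis mn_cocycle_sum_add mult_2 power_Suc)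
  also have "\<dots> = (mn_gamma w \<noteq> mn_gamma (odometer w))"
    using funpow_odometer_dyadic[OF a w] Suc.IH[OF a w] Suc.IH[OF a Tw] by auto
  also have "\<dots> = (mn_gamma y = odd a)"
    using mn_gamma_odometer_digit[OF Suc.prems(2,3), of "a mod 2"]
    unfolding w_def by (simp add: odd_iff_mod_2_eq_one)
  finally show ?case by simp
qed

lemma odo_level_measurable[measurable]: "odo_level \<in> borel \<rightarrow>\<^sub>M count_space UNIV"
  unfolding odo_level_def by measurable

lemma mn_cocycle_measurable[measurable]: "mn_cocycle \<in> borel \<rightarrow>\<^sub>M count_space UNIV"
  unfolding mn_cocycle_def by measurable

lemma odometer_measurable[measurable]: "odometer \<in> borel_measurable borel"
  unfolding odometer_def by measurable

lemma funpow_odometer_measurable[measurable]: "odometer ^^ n \<in> borel_measurable borel"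
  by (induction n) (simp_all add: measurable_comp[OF _ odometer_measurable])

lemma mn_cocycle_sum_measurable[measurable]: "mn_cocycle_sum n \<in> borel \<rightarrow>\<^sub>M count_space UNIV"
proof (induction n)
  case (Suc n)
  note Suc[measurable]
  show ?case by simp
qed simp

lemma mn_gamma_measurable[measurable]: "mn_gamma \<in> borel \<rightarrow>\<^sub>M count_space UNIV"
  unfolding mn_gamma_def by measurable

section \<open>Lebesgue measure of level sets and of images under the odometer\<close>

lemma emeasure_lborel_affine_image:
  fixes S :: "real set"
  assumes S: "S \<in> sets borel" and m: "m \<noteq> 0"
  shows "(\<lambda>x. m * x + d) ` S \<in> sets borel"
    and "emeasure lborel ((\<lambda>x. m * x + d) ` S) = ennreal \<bar>m\<bar> * emeasure lborel S"
proof -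
  have "(\<lambda>x. m * x + d) ` S = (\<lambda>y. (y - d) / m) -` S"
    using m by (force simp: field_simps)
  moreover have "(\<lambda>y. (y - d) / m) \<in> borel_measurable borel" by measurable
  ultimately show img: "(\<lambda>x. m * x + d) ` S \<in> sets borel"
    using measurable_sets_borel S by metis
  have "emeasure lebesgue ((\<lambda>x. m *\<^sub>R x + d) ` S) = \<bar>m\<bar> ^ DIM(real) * emeasure lebesgue S"
    by (rule emeasure_lebesgue_affine)
  then show "emeasure lborel ((\<lambda>x. m * x + d) ` S) = ennreal \<bar>m\<bar> * emeasure lborel S"
    using S img by simp
qed

lemma emeasure_unit_interval_self_similar:
  fixes P Q :: "real \<Rightarrow> bool"
  assumes Q: "{y\<in>{0..<1}. Q y} \<in> sets borel"
    and lower: "\<And>y. 0 \<le> y \<Longrightarrow> y < 1/2 \<Longrightarrow> P y = ((1/4 \<le> y) = u)"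
    and upper: "\<And>y. 1/2 \<le> y \<Longrightarrow> y < 1 \<Longrightarrow> P y = Q (2*y - 1)"
  shows "emeasure lborel {y\<in>{0..<1}. P y}
    = ennreal (1/4) + ennreal (1/2) * emeasure lborel {y\<in>{0..<1}. Q y}"
proof -
  let ?copy = "(\<lambda>z. (1/2) * z + 1/2) ` {y\<in>{0..<1}. Q y}"
  let ?low = "{y\<in>{0..<1/2::real}. (1/4 \<le> y) = u}"
  have low: "emeasure lborel ?low = ennreal (1/4)"
  proof (cases u)
    case True
    then have "?low = {1/4..<1/2}" by auto
    then show ?thesis by simp
  next
    case False
    then have "?low = {0..<1/4}" by auto
    then show ?thesis by simp
  qed
  have split: "{y\<in>{0..<1}. P y} = ?low \<union> ?copy"
  proof (intro set_eqI iffI)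
    fix y assume y: "y \<in> {y\<in>{0..<1}. P y}"
    show "y \<in> ?low \<union> ?copy"
    proof (cases "y < 1/2")
      case False
      then have "2*y - 1 \<in> {y\<in>{0..<1}. Q y}" using y upper by auto
      moreover have "y = (1/2) * (2*y - 1) + 1/2" by (simp add: field_simps)
      ultimately show ?thesis by blast
    qed (use y lower in auto)
  qed (use lower upper in auto)
  have "emeasure lborel {y\<in>{0..<1}. P y} = emeasure lborel ?low + emeasure lborel ?copy"
    unfolding split using emeasure_lborel_affine_image(1)[OF Q, of "1/2" "1/2"]
    by (intro plus_emeasure[symmetric]) auto
  then show ?thesis unfolding low using emeasure_lborel_affine_image(2)[OF Q, of "1/2" "1/2"] by simp
qed

lemma mn_cocycle_lower_half: "0 \<le> y \<Longrightarrow> y < 1/2 \<Longrightarrow> mn_cocycle y = (1/4 \<le> y)"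
  using mn_cocycle_half[of "2*y"] by (simp add: mult.commute)

lemma mn_cocycle_upper_half: "1/2 \<le> y \<Longrightarrow> y < 1 \<Longrightarrow> mn_cocycle y = mn_cocycle (2*y - 1)"
  using mn_cocycle_half_shift[of "2*y - 1"] by simp

lemma ennreal_quarter_plus_half_mult:
  "0 \<le> r \<Longrightarrow> ennreal (1/4) + ennreal (1/2) * ennreal r = ennreal (1/4 + r/2)"
  by (subst ennreal_mult[symmetric]) (simp_all flip: ennreal_plus)

lemma emeasure_mn_cocycle_level_set:
  "emeasure lborel {y\<in>{0..<1}. mn_cocycle y = w} = ennreal (1/2)"
proof -
  let ?x = "emeasure lborel {y\<in>{0..<1}. mn_cocycle y = w}"
  have "?x \<le> emeasure lborel {0..<1::real}" by (rule emeasure_mono) auto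
  then obtain r where r: "?x = ennreal r" "0 \<le> r" by (cases ?x rule: ennreal_cases) (auto simp: top_unique)
  have "?x = ennreal (1/4) + ennreal (1/2) * ?x"
    using mn_cocycle_lower_half mn_cocycle_upper_half
    by (intro emeasure_unit_interval_self_similar) simp_all
  then have "r = 1/4 + r/2" using r by (simp only: ennreal_quarter_plus_half_mult ennreal_inj)
  then have "r = 1/2" by linarith
  then show ?thesis using r(1) by (simp only:)
qed

lemma emeasure_mn_gamma_level_set:
  "emeasure lborel {y\<in>{0..<1}. mn_gamma y = v} = ennreal (1/2)"
proof -
  have "emeasure lborel {y\<in>{0..<1}. mn_gamma y = v}
      = ennreal (1/4) + ennreal (1/2) * emeasure lborel {y\<in>{0..<1}. mn_cocycle y = (\<not> v)}"
  proof (rule emeasure_unit_interval_self_similar)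
    fix y :: real assume "1/2 \<le> y" "y < 1"
    then show "(mn_gamma y = v) = (mn_cocycle (2*y - 1) = (\<not> v))"
      using mn_cocycle_upper_half[of y] by (auto simp: mn_gamma_def)
  qed (simp_all add: mn_gamma_def mn_cocycle_lower_half)
  also have "\<dots> = ennreal (1/4 + (1/2)/2)"
    unfolding emeasure_mn_cocycle_level_set by (rule ennreal_quarter_plus_half_mult) simp
  finally show ?thesis by simp
qed

lemma emeasure_lborel_image_piecewise_translation:
  fixes piece :: "real \<Rightarrow> 'i::countable"
  assumes X: "X \<in> sets borel" and piece[measurable]: "piece \<in> borel \<rightarrow>\<^sub>M count_space UNIV"
    and inj: "inj_on f X" and f: "\<And>x. x \<in> X \<Longrightarrow> f x = x + \<tau> (piece x)"
  shows "f ` X \<in> sets borel" "emeasure lborel (f ` X) = emeasure lborel X"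
proof -
  define Y where "Y i = (\<lambda>x. x + \<tau> i) ` (X \<inter> piece -` {i})" for i
  have XP: "X \<inter> piece -` {i} \<in> sets borel" for i using X by measurable
  have Y: "Y i \<in> sets borel" "emeasure lborel (Y i) = emeasure lborel (X \<inter> piece -` {i})" for i
    unfolding Y_def using emeasure_lborel_affine_image[OF XP, of 1 "\<tau> i"] by simp_all
  have Y_eq: "Y i = f ` (X \<inter> piece -` {i})" for i
    unfolding Y_def using f by (intro image_cong) auto
  have img: "f ` X = (\<Union>i. Y i)" unfolding Y_eq by blast
  have "disjoint_family Y"
  proof (unfold disjoint_family_on_def, intro ballI impI)
    fix i j :: 'i assume "i \<noteq> j"
    then show "Y i \<inter> Y j = {}"
      unfolding Y_eq using inj_onD[OF inj] by blast
  qed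
  moreover have "disjoint_family (\<lambda>i. X \<inter> piece -` {i})" by (auto simp: disjoint_family_on_def)
  ultimately have "emeasure lborel (\<Union>i. Y i) = emeasure lborel (\<Union>i. X \<inter> piece -` {i})"
    using emeasure_UN_countable[of UNIV Y lborel] XP Y
      emeasure_UN_countable[of UNIV "\<lambda>i. X \<inter> piece -` {i}" lborel] by simp
  moreover have "(\<Union>i. X \<inter> piece -` {i}) = X" by auto
  ultimately show "f ` X \<in> sets borel" "emeasure lborel (f ` X) = emeasure lborel X"
    unfolding img using Y by auto
qed

lemma half_power_interval_unique:
  assumes "(1/2::real) ^ Suc n \<le> t" "t < (1/2) ^ n" "(1/2) ^ Suc m \<le> t" "t < (1/2) ^ m"
  shows "n = m"
proof (rule ccontr)
  assume "n \<noteq> m"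
  then have "Suc n \<le> m \<or> Suc m \<le> n" by auto
  then show False
  proof
    assume "Suc n \<le> m"
    then have "(1/2::real) ^ m \<le> (1/2) ^ Suc n" by (intro power_decreasing) auto
    then show False using assms by linarith
  next
    assume "Suc m \<le> n"
    then have "(1/2::real) ^ n \<le> (1/2) ^ Suc m" by (intro power_decreasing) auto
    then show False using assms by linarith
  qed
qed

lemma inj_on_odometer: "inj_on odometer {0..<1}"
proof (rule inj_onI)
  fix x x' assume x: "x \<in> {0..<1}" and x': "x' \<in> {0..<1}" and eq: "odometer x = odometer x'"
  have x01: "0 \<le> x" "x < 1" and x'01: "0 \<le> x'" "x' < 1" using x x' by auto
  have level: "odo_level x = odo_level x'"
    using odometer_bounds[OF x01] odometer_bounds[OF x'01] unfolding eq
    by (rule half_power_interval_unique)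
  show "x = x'" using eq odometer_eq[OF x01] odometer_eq[OF x'01] unfolding level by linarith
qed

lemma funpow_odometer_in_unit: "x \<in> {0..<1} \<Longrightarrow> (odometer ^^ n) x \<in> {0..<1}"
proof (induction n)
  case (Suc n)
  then show ?case using odometer_in_unit[of "(odometer ^^ n) x"] by auto
qed simp

lemma odometer_image_lborel:
  assumes "X \<in> sets borel" "X \<subseteq> {0..<1}"
  shows "odometer ` X \<in> sets borel" "emeasure lborel (odometer ` X) = emeasure lborel X"
proof -
  have translation: "odometer x = x + ((1/2) ^ odo_level x + (1/2) ^ Suc (odo_level x) - 1)" if "x \<in> X" for x
  proof -
    have "0 \<le> x" "x < 1" using assms(2) that by auto
    then show ?thesis by (simp add: odometer_eq)
  qed
  note piecewise = emeasure_lborel_image_piecewise_translation[OF assms(1) odo_level_measurable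
      inj_on_subset[OF inj_on_odometer assms(2)]]
  show "odometer ` X \<in> sets borel" by (rule piecewise(1)) (rule translation)
  show "emeasure lborel (odometer ` X) = emeasure lborel X" by (rule piecewise(2)) (rule translation)
qed

lemma funpow_odometer_image_lborel:
  assumes "X \<in> sets borel" "X \<subseteq> {0..<1}"
  shows "(odometer ^^ n) ` X \<in> sets borel \<and>
    emeasure lborel ((odometer ^^ n) ` X) = emeasure lborel X"
proof (induction n)
  case (Suc n)
  have "(odometer ^^ n) ` X \<subseteq> {0..<1}" using assms(2) funpow_odometer_in_unit by auto
  then show ?case using Suc odometer_image_lborel[of "(odometer ^^ n) ` X"] by (simp add: image_comp)
qed (use assms in simp)

section \<open>Dyadic intervals\<close>

definition dyadic_interval :: "nat \<Rightarrow> nat \<Rightarrow> real set" where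
  "dyadic_interval N a = {x. real a \<le> 2 ^ N * x \<and> 2 ^ N * x < real a + 1}"

definition dyadic_union :: "nat \<Rightarrow> int set \<Rightarrow> real set" where
  "dyadic_union j I = {x\<in>{0..<1}. \<lfloor>2 ^ j * x\<rfloor> \<in> I}"

definition mn_fiber_fixed :: "nat \<Rightarrow> real set" where
  "mn_fiber_fixed N = {x\<in>{0..<1}. \<not> mn_cocycle_sum (2 ^ N) x}"

lemma dyadic_interval_measurable[measurable]: "dyadic_interval N a \<in> sets borel"
  unfolding dyadic_interval_def by measurable

lemma dyadic_union_measurable[measurable]: "dyadic_union j I \<in> sets borel"
  unfolding dyadic_union_def by measurable

lemma mn_fiber_fixed_measurable[measurable]: "mn_fiber_fixed N \<in> sets borel"
  unfolding mn_fiber_fixed_def by measurable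

lemma floor_dyadic_interval: "x \<in> dyadic_interval N a \<Longrightarrow> \<lfloor>2 ^ N * x\<rfloor> = int a"
  unfolding dyadic_interval_def by (simp add: floor_eq_iff)

lemma dyadic_interval_subset_unit:
  assumes "a < 2 ^ N" shows "dyadic_interval N a \<subseteq> {0..<1}"
proof
  fix x assume x: "x \<in> dyadic_interval N a"
  have "real a + 1 \<le> 2 ^ N" using assms
    by (metis Suc_leI of_nat_Suc of_nat_le_iff of_nat_numeral of_nat_power add.commute)
  moreover have "real a \<le> 2 ^ N * x" "2 ^ N * x < real a + 1"
    using x unfolding dyadic_interval_def by auto
  ultimately have "2 ^ N * 0 \<le> 2 ^ N * x" "2 ^ N * x < 2 ^ N * 1" by linarith+
  then show "x \<in> {0..<1}" by (simp only: mult_less_cancel_left_pos mult_le_cancel_left_pos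
        zero_less_power zero_less_numeral atLeastLessThan_iff)
qed

lemma in_dyadic_interval_floor:
  assumes "x \<in> {0..<1::real}"
  shows "x \<in> dyadic_interval N (nat \<lfloor>2 ^ N * x\<rfloor>)" "nat \<lfloor>2 ^ N * x\<rfloor> < 2 ^ N"
proof -
  show "x \<in> dyadic_interval N (nat \<lfloor>2 ^ N * x\<rfloor>)" using assms unfolding dyadic_interval_def by auto
  have "2 ^ N * x < 2 ^ N * 1" using assms by (intro mult_strict_left_mono) auto
  then have "\<lfloor>2 ^ N * x\<rfloor> < 2 ^ N" by (simp add: floor_less_iff)
  then show "nat \<lfloor>2 ^ N * x\<rfloor> < 2 ^ N" using assms by (simp add: nat_less_iff)
qed

lemma disjoint_family_dyadic_interval: "disjoint_family (dyadic_interval N)"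
  unfolding disjoint_family_on_def using floor_dyadic_interval by (metis disjoint_iff of_nat_eq_iff)

lemma dyadic_interval_rescale:
  assumes "G \<subseteq> {0..<1}"
  shows "{x. 2 ^ N * x - real a \<in> G} = (\<lambda>y. (1 / 2 ^ N) * y + real a / 2 ^ N) ` G"
proof (intro set_eqI iffI)
  fix x assume "x \<in> {x. 2 ^ N * x - real a \<in> G}"
  moreover have "x = (1 / 2 ^ N) * (2 ^ N * x - real a) + real a / 2 ^ N" by (simp add: field_simps)
  ultimately show "x \<in> (\<lambda>y. (1 / 2 ^ N) * y + real a / 2 ^ N) ` G" by auto
qed (auto simp: field_simps)

lemma emeasure_dyadic_rescale:
  assumes "G \<subseteq> {0..<1}" "G \<in> sets borel"
  shows "emeasure lborel {x. 2 ^ N * x - real a \<in> G} = ennreal (1 / 2 ^ N) * emeasure lborel G"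
  unfolding dyadic_interval_rescale[OF assms(1)]
  using emeasure_lborel_affine_image(2)[OF assms(2), of "1 / 2 ^ N" "real a / 2 ^ N"] by simp

lemma emeasure_dyadic_interval: "emeasure lborel (dyadic_interval N a) = ennreal (1 / 2 ^ N)"
proof -
  have "dyadic_interval N a = {x. 2 ^ N * x - real a \<in> {0..<1}}"
    unfolding dyadic_interval_def by auto
  moreover have "emeasure lborel {x. 2 ^ N * x - real a \<in> {0..<1}} = ennreal (1 / 2 ^ N) * emeasure lborel {0..<1::real}"
    by (rule emeasure_dyadic_rescale) auto
  ultimately show ?thesis by simp
qed

lemma emeasure_eq_sum_dyadic_interval:
  assumes "W \<in> sets borel" "W \<subseteq> {0..<1}"
  shows "emeasure lborel W = (\<Sum>a<2 ^ N. emeasure lborel (W \<inter> dyadic_interval N a))"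
proof -
  have "W = (\<Union>a<2 ^ N. W \<inter> dyadic_interval N a)"
    using assms(2) in_dyadic_interval_floor[of _ N] by blast
  moreover have "disjoint_family (\<lambda>a. W \<inter> dyadic_interval N a)"
    using disjoint_family_dyadic_interval by (rule disjoint_family_on_bisimulation) auto
  ultimately show ?thesis
    using assms(1) by (subst sum_emeasure) (auto intro: disjoint_family_on_mono[rotated])
qed

lemma mn_fiber_fixed_Int_dyadic_interval:
  assumes "a < 2 ^ Suc K"
  shows "mn_fiber_fixed (Suc K) \<inter> dyadic_interval (Suc K) a
    = {x. 2 ^ Suc K * x - real a \<in> {y\<in>{0..<1}. mn_gamma y = (odd a \<noteq> (1 \<le> K))}}"
proof (intro set_eqI)
  fix x
  define y where "y = 2 ^ Suc K * x - real a"
  have "x = (real a + y) / 2 ^ Suc K" unfolding y_def by (simp add: field_simps)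
  then have sum: "mn_cocycle_sum (2 ^ Suc K) x = (mn_gamma y \<noteq> (odd a \<noteq> (1 \<le> K)))"
    if "0 \<le> y" "y < 1"
    using mn_cocycle_sum_dyadic[OF assms that] by simp
  have interval: "x \<in> dyadic_interval (Suc K) a \<longleftrightarrow> 0 \<le> y \<and> y < 1"
    unfolding y_def dyadic_interval_def by auto
  have "x \<in> mn_fiber_fixed (Suc K) \<inter> dyadic_interval (Suc K) a
      \<longleftrightarrow> x \<in> dyadic_interval (Suc K) a \<and> \<not> mn_cocycle_sum (2 ^ Suc K) x"
    using dyadic_interval_subset_unit[OF assms] unfolding mn_fiber_fixed_def by auto
  moreover have "x \<in> {x. 2 ^ Suc K * x - real a \<in> {y\<in>{0..<1}. mn_gamma y = (odd a \<noteq> (1 \<le> K))}}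
      \<longleftrightarrow> 0 \<le> y \<and> y < 1 \<and> mn_gamma y = (odd a \<noteq> (1 \<le> K))"
    unfolding y_def by simp
  ultimately show "x \<in> mn_fiber_fixed (Suc K) \<inter> dyadic_interval (Suc K) a
    \<longleftrightarrow> x \<in> {x. 2 ^ Suc K * x - real a \<in> {y\<in>{0..<1}. mn_gamma y = (odd a \<noteq> (1 \<le> K))}}"
    unfolding interval using sum by blast
qed

lemma emeasure_mn_fiber_fixed_Int_dyadic_interval:
  assumes "a < 2 ^ Suc K"
  shows "emeasure lborel (mn_fiber_fixed (Suc K) \<inter> dyadic_interval (Suc K) a)
    = ennreal (1/2) * emeasure lborel (dyadic_interval (Suc K) a)"
proof -
  let ?G = "{y\<in>{0..<1}. mn_gamma y = (odd a \<noteq> (1 \<le> K))}"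
  have "emeasure lborel {x. 2 ^ Suc K * x - real a \<in> ?G} = ennreal (1 / 2 ^ Suc K) * emeasure lborel ?G"
    by (rule emeasure_dyadic_rescale) auto
  then show ?thesis
    unfolding mn_fiber_fixed_Int_dyadic_interval[OF assms] emeasure_dyadic_interval
      emeasure_mn_gamma_level_set by (simp only: mult.commute)
qed

lemma floor_dyadic_coarser:
  assumes "j \<le> N" "x \<in> dyadic_interval N a"
  shows "\<lfloor>2 ^ j * x\<rfloor> = int a div 2 ^ (N - j)"
proof -
  have "(2::real) ^ N = 2 ^ j * 2 ^ (N - j)" using assms(1) by (simp flip: power_add)
  then have "2 ^ j * x = (2 ^ N * x) / real_of_int (2 ^ (N - j))" by simp
  then have "\<lfloor>2 ^ j * x\<rfloor> = \<lfloor>2 ^ N * x\<rfloor> div 2 ^ (N - j)"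
    using floor_divide_real_eq_div[of "2 ^ (N - j)" "2 ^ N * x"] by simp
  then show ?thesis using floor_dyadic_interval[OF assms(2)] by simp
qed

lemma dyadic_union_Int_dyadic_interval:
  assumes "j \<le> N" "a < 2 ^ N"
  shows "dyadic_union j I \<inter> dyadic_interval N a
    = (if int a div 2 ^ (N - j) \<in> I then dyadic_interval N a else {})"
  using floor_dyadic_coarser[OF assms(1)] dyadic_interval_subset_unit[OF assms(2)]
  unfolding dyadic_union_def by auto

lemma emeasure_dyadic_union_Int_mn_fiber_fixed:
  assumes "j \<le> Suc K"
  shows "emeasure lborel (dyadic_union j I \<inter> mn_fiber_fixed (Suc K))
    = ennreal (1/2) * emeasure lborel (dyadic_union j I)"
proof -
  let ?A = "dyadic_union j I" and ?Z = "mn_fiber_fixed (Suc K)" and ?D = "dyadic_interval (Suc K)"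
  have "emeasure lborel (?A \<inter> ?Z) = (\<Sum>a<2 ^ Suc K. emeasure lborel (?A \<inter> ?Z \<inter> ?D a))"
    by (rule emeasure_eq_sum_dyadic_interval) (auto simp: mn_fiber_fixed_def)
  also have "\<dots> = (\<Sum>a<2 ^ Suc K. ennreal (1/2) * emeasure lborel (?A \<inter> ?D a))"
  proof (rule sum.cong)
    fix a :: nat assume "a \<in> {..<2 ^ Suc K}"
    then have a: "a < 2 ^ Suc K" by simp
    have "?A \<inter> ?Z \<inter> ?D a = (if int a div 2 ^ (Suc K - j) \<in> I then ?Z \<inter> ?D a else {})"
      using dyadic_union_Int_dyadic_interval[OF assms a, of I] by auto
    then show "emeasure lborel (?A \<inter> ?Z \<inter> ?D a) = ennreal (1/2) * emeasure lborel (?A \<inter> ?D a)"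
      unfolding dyadic_union_Int_dyadic_interval[OF assms a]
      using emeasure_mn_fiber_fixed_Int_dyadic_interval[OF a] by auto
  qed simp
  also have "\<dots> = ennreal (1/2) * emeasure lborel ?A"
    by (subst emeasure_eq_sum_dyadic_interval[of ?A "Suc K"])
      (auto simp: dyadic_union_def sum_distrib_left)
  finally show ?thesis .
qed

lemma funpow_odometer_dyadic_interval:
  assumes "a < 2 ^ N" "x \<in> dyadic_interval N a"
  shows "(odometer ^^ 2 ^ N) x \<in> dyadic_interval N a"
proof -
  define y where "y = 2 ^ N * x - real a"
  have y: "0 \<le> y" "y < 1" using assms(2) unfolding y_def dyadic_interval_def by auto
  have "x = (real a + y) / 2 ^ N" unfolding y_def by (simp add: field_simps)
  then have "(odometer ^^ 2 ^ N) x = (real a + odometer y) / 2 ^ N"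
    using funpow_odometer_dyadic[OF assms(1) y] by simp
  then show ?thesis using odometer_in_unit[OF y] unfolding dyadic_interval_def by (simp add: field_simps)
qed

lemma funpow_odometer_dyadic_union:
  assumes "j \<le> N" "x \<in> dyadic_union j I"
  shows "(odometer ^^ 2 ^ N) x \<in> dyadic_union j I"
proof -
  have x: "x \<in> {0..<1}" using assms(2) unfolding dyadic_union_def by auto
  note a = in_dyadic_interval_floor[OF x, of N]
  note Tx = funpow_odometer_dyadic_interval[OF a(2,1)]
  show ?thesis
    using floor_dyadic_coarser[OF assms(1) a(1)] floor_dyadic_coarser[OF assms(1) Tx]
      dyadic_interval_subset_unit[OF a(2)] Tx assms(2)
    unfolding dyadic_union_def by auto
qed

section \<open>Return estimate on the unit interval\<close>

lemma dyadic_union_between: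
  assumes K: "compact K" "K \<subseteq> {0..<1}" and U: "open U" "K \<subseteq> U"
  obtains j I where "K \<subseteq> dyadic_union j I" "dyadic_union j I \<subseteq> U"
proof -
  obtain d where d: "d > 0" "\<forall>x\<in>K. \<forall>y\<in>- U. d \<le> dist x y"
    using separate_compact_closed[OF K(1), of "- U"] U by auto
  obtain j where j: "(1/2::real) ^ j < d" using real_arch_pow_inv[OF d(1), of "1/2"] by auto
  define I where "I = (\<lambda>x. \<lfloor>2 ^ j * x\<rfloor>) ` K"
  have "dyadic_union j I \<subseteq> U"
  proof
    fix x assume "x \<in> dyadic_union j I"
    then obtain k where k: "k \<in> K" "\<lfloor>2 ^ j * x\<rfloor> = \<lfloor>2 ^ j * k\<rfloor>"
      unfolding dyadic_union_def I_def by auto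
    then have "\<bar>2 ^ j * x - 2 ^ j * k\<bar> < (1::real)" by linarith
    then have "2 ^ j * \<bar>x - k\<bar> < (1::real)" by (simp add: abs_mult flip: right_diff_distrib)
    then have "\<bar>x - k\<bar> < (1/2) ^ j" by (simp add: field_simps power_one_over)
    then have "dist k x < d" using j by (simp add: dist_real_def abs_minus_commute)
    then show "x \<in> U" using d(2) k(1) by force
  qed
  moreover have "K \<subseteq> dyadic_union j I" using K(2) unfolding dyadic_union_def I_def by auto
  ultimately show thesis using that by blast
qed

lemma dyadic_union_approx:
  assumes E: "E \<in> sets borel" "E \<subseteq> {0..<1}" and e: "0 < e"
  obtains j I where "emeasure lborel (E - dyadic_union j I) < ennreal e"
    "emeasure lborel (dyadic_union j I - E) < ennreal e"
proof -
  obtain U where U: "open U" "E \<subseteq> U" "emeasure lborel (U - E) < ennreal e"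
    using outer_regular_lborel[OF E(1) e] by blast
  have "E \<in> sets lebesgue" using E(1) by (intro sets_completionI_sets) simp
  then obtain K where K: "closed K" "K \<subseteq> E" "emeasure lebesgue (E - K) < ennreal e"
    using sets_lebesgue_inner_closed[OF _ e] by metis
  have KB: "K \<in> sets borel" using K(1) by (rule borel_closed)
  have K01: "K \<subseteq> {0..<1}" using K(2) E(2) by blast
  then have "compact K"
    using K(1) bounded_subset[OF bounded_Ico[of 0 1]] by (simp add: compact_eq_bounded_closed)
  moreover have "K \<subseteq> U" using K(2) U(2) by blast
  ultimately obtain j I where A: "K \<subseteq> dyadic_union j I" "dyadic_union j I \<subseteq> U"
    using dyadic_union_between[OF _ K01 U(1)] by blast
  have "emeasure lborel (E - dyadic_union j I) \<le> emeasure lborel (E - K)"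
    using A(1) E(1) KB by (intro emeasure_mono) auto
  also have "\<dots> = emeasure lebesgue (E - K)" using E(1) KB by simp
  also have "\<dots> < ennreal e" by (rule K(3))
  finally have "emeasure lborel (E - dyadic_union j I) < ennreal e" .
  moreover have "emeasure lborel (dyadic_union j I - E) \<le> emeasure lborel (U - E)"
    using A(2) E(1) U(1) by (intro emeasure_mono) auto
  ultimately show thesis using U(3) that by (meson le_less_trans)
qed

text \<open>\<open>T^(2^N)\<close> preserves Lebesgue measure and every dyadic union \<open>A\<close> of level at most \<open>N\<close>; since
  the fibre is left unflipped on half of \<open>A\<close>, half of \<open>E \<approx> A\<close> is carried back into \<open>E\<close>.\<close>
lemma half_return_lower_bound:
  assumes E: "E \<in> sets borel" "E \<subseteq> {0..<1}" and j: "j \<le> Suc K" and e: "0 \<le> e"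
    and approx: "emeasure lborel (E - dyadic_union j I) \<le> ennreal e"
      "emeasure lborel (dyadic_union j I - E) \<le> ennreal e"
  shows "ennreal (1/2) * emeasure lborel E
    \<le> emeasure lborel ((odometer ^^ 2 ^ Suc K) ` (E \<inter> mn_fiber_fixed (Suc K)) \<inter> E) + ennreal (3 * e)"
proof -
  let ?A = "dyadic_union j I" and ?Z = "mn_fiber_fixed (Suc K)" and ?S = "odometer ^^ 2 ^ Suc K"
  let ?R = "?S ` (E \<inter> ?Z) \<inter> E"
  define X where "X = E \<inter> ?A \<inter> ?Z"
  have X: "X \<in> sets borel" "X \<subseteq> {0..<1}" unfolding X_def using E by auto
  note SX = funpow_odometer_image_lborel[OF X, of "2 ^ Suc K"]
  have R: "?R \<in> sets borel" using funpow_odometer_image_lborel[of "E \<inter> ?Z"] E by auto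
  have "emeasure lborel (?A \<inter> ?Z) \<le> emeasure lborel (X \<union> (?A - E))"
    using E unfolding X_def by (intro emeasure_mono) auto
  also have "\<dots> \<le> emeasure lborel (?S ` X) + emeasure lborel (?A - E)"
    using E X SX by (intro emeasure_subadditive[THEN order.trans]) auto
  also have "\<dots> \<le> emeasure lborel (?R \<union> (?A - E)) + emeasure lborel (?A - E)"
    using funpow_odometer_dyadic_union[OF j] SX E R unfolding X_def
    by (intro add_right_mono emeasure_mono) auto
  also have "\<dots> \<le> emeasure lborel ?R + emeasure lborel (?A - E) + emeasure lborel (?A - E)"
    using E R by (intro add_right_mono emeasure_subadditive) auto
  also have "\<dots> \<le> emeasure lborel ?R + ennreal e + ennreal e"
    using approx(2) by (intro add_mono) auto
  finally have AZ: "emeasure lborel (?A \<inter> ?Z) \<le> emeasure lborel ?R + ennreal e + ennreal e" .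
  have "emeasure lborel E \<le> emeasure lborel (?A \<union> (E - ?A))" using E by (intro emeasure_mono) auto
  also have "\<dots> \<le> emeasure lborel ?A + emeasure lborel (E - ?A)"
    using E by (intro emeasure_subadditive) auto
  finally have "ennreal (1/2) * emeasure lborel E
      \<le> ennreal (1/2) * emeasure lborel ?A + ennreal (1/2) * emeasure lborel (E - ?A)"
    by (simp add: mult_left_mono flip: distrib_left)
  also have "\<dots> = emeasure lborel (?A \<inter> ?Z) + ennreal (1/2) * emeasure lborel (E - ?A)"
    using emeasure_dyadic_union_Int_mn_fiber_fixed[OF j] by simp
  also have "\<dots> \<le> (emeasure lborel ?R + ennreal e + ennreal e) + ennreal e"
    using AZ approx(1) mult_right_mono[of "ennreal (1/2)" 1] ennreal_leI[of "1/2" 1]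
    by (intro add_mono) (auto intro: order.trans)
  also have "\<dots> = emeasure lborel ?R + ennreal (3 * e)"
    using e by (simp add: add.assoc flip: ennreal_plus)
  finally show ?thesis .
qed

lemma eventually_half_return:
  assumes "E \<in> sets borel" "E \<subseteq> {0..<1}" "0 < e"
  shows "\<forall>\<^sub>F k in sequentially. ennreal (1/2) * emeasure lborel E
    \<le> emeasure lborel ((odometer ^^ 2 ^ Suc k) ` (E \<inter> mn_fiber_fixed (Suc k)) \<inter> E) + ennreal e"
proof -
  obtain j I where "emeasure lborel (E - dyadic_union j I) < ennreal (e/3)"
    "emeasure lborel (dyadic_union j I - E) < ennreal (e/3)"
    using dyadic_union_approx[OF assms(1,2), of "e/3"] assms(3) by auto
  then show ?thesis
    using half_return_lower_bound[OF assms(1,2), of j _ "e/3" I] assms(3)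
    by (intro eventually_sequentiallyI[of j]) (simp add: less_imp_le)
qed

section \<open>The skew product\<close>

definition slice :: "(real \<times> bool) set \<Rightarrow> bool \<Rightarrow> real set" where
  "slice A g = (\<lambda>x. (x, g)) -` A"

lemma space_haar_Z2[simp]: "space haar_Z2 = UNIV"
  unfolding haar_Z2_def by simp

lemma sets_haar_Z2[simp]: "sets haar_Z2 = UNIV"
  unfolding haar_Z2_def by simp

lemma space_mn_measure: "space mn_measure = {0..<1} \<times> UNIV"
  unfolding mn_measure_def by (simp add: space_pair_measure)

lemma sets_restrict_unit_iff:
  "X \<in> sets (restrict_space lborel {0..<1::real}) \<longleftrightarrow> X \<subseteq> {0..<1} \<and> X \<in> sets borel"
  by (subst sets_restrict_space_iff) auto

lemma slice_decomposition: "A = slice A False \<times> {False} \<union> slice A True \<times> {True}"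
  unfolding slice_def by (auto simp: split_paired_all) (metis (full_types))

lemma sets_mn_measure_iff:
  "A \<in> sets mn_measure \<longleftrightarrow> A \<subseteq> {0..<1} \<times> UNIV \<and> (\<forall>g. slice A g \<in> sets borel)"
proof
  assume A: "A \<in> sets mn_measure"
  then have "slice A g \<in> sets (restrict_space lborel {0..<1})" for g
    unfolding slice_def mn_measure_def by (rule sets_Pair2)
  then show "A \<subseteq> {0..<1} \<times> UNIV \<and> (\<forall>g. slice A g \<in> sets borel)"
    using sets.sets_into_space[OF A] space_mn_measure sets_restrict_unit_iff by auto
next
  assume A: "A \<subseteq> {0..<1} \<times> UNIV \<and> (\<forall>g. slice A g \<in> sets borel)"
  then have "slice A g \<in> sets (restrict_space lborel {0..<1})" for g
    unfolding sets_restrict_unit_iff slice_def by auto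
  then have "slice A g \<times> {g} \<in> sets mn_measure" for g
    unfolding mn_measure_def by (intro pair_measureI) auto
  then show "A \<in> sets mn_measure" by (subst slice_decomposition) auto
qed

lemma emeasure_mn_measure:
  assumes A: "A \<in> sets mn_measure"
  shows "emeasure mn_measure A
    = ennreal (1/2) * emeasure lborel (slice A False) + ennreal (1/2) * emeasure lborel (slice A True)"
proof -
  interpret Z2: prob_space haar_Z2 unfolding haar_Z2_def by (rule prob_space_measure_pmf)
  have slice: "slice A g \<in> sets (restrict_space lborel {0..<1})" "slice A g \<subseteq> {0..<1}" for g
    using A unfolding sets_mn_measure_iff sets_restrict_unit_iff slice_def by auto
  have rect: "slice A g \<times> {g} \<in> sets mn_measure" for g
    unfolding mn_measure_def using slice by (intro pair_measureI) auto
  have "emeasure mn_measure (slice A g \<times> {g})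
      = emeasure (restrict_space lborel {0..<1}) (slice A g) * emeasure haar_Z2 {g}" for g
    unfolding mn_measure_def by (rule Z2.emeasure_pair_measure_Times[OF slice(1)]) simp
  moreover have "emeasure haar_Z2 {g} = ennreal (1/2)" for g
    unfolding haar_Z2_def by (simp add: emeasure_pmf_single)
  ultimately have "emeasure mn_measure (slice A g \<times> {g}) = ennreal (1/2) * emeasure lborel (slice A g)" for g
    using slice(2) by (simp add: emeasure_restrict_space mult.commute)
  moreover have "emeasure mn_measure A
      = emeasure mn_measure (slice A False \<times> {False}) + emeasure mn_measure (slice A True \<times> {True})"
    using rect by (subst slice_decomposition, intro plus_emeasure[symmetric]) auto
  ultimately show ?thesis by simp
qed

lemma slice_funpow_mathew_nadkarni_image:
  "slice ((mathew_nadkarni ^^ n) ` B) h =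
    (odometer ^^ n) ` (slice B h \<inter> {x. \<not> mn_cocycle_sum n x})
      \<union> (odometer ^^ n) ` (slice B (\<not> h) \<inter> {x. mn_cocycle_sum n x})"
proof (intro set_eqI iffI)
  fix z assume "z \<in> slice ((mathew_nadkarni ^^ n) ` B) h"
  then obtain x g where "(x, g) \<in> B" "(mathew_nadkarni ^^ n) (x, g) = (z, h)"
    unfolding slice_def by auto
  then show "z \<in> (odometer ^^ n) ` (slice B h \<inter> {x. \<not> mn_cocycle_sum n x})
      \<union> (odometer ^^ n) ` (slice B (\<not> h) \<inter> {x. mn_cocycle_sum n x})"
    unfolding funpow_mathew_nadkarni slice_def by (cases "mn_cocycle_sum n x") auto
next
  fix z assume "z \<in> (odometer ^^ n) ` (slice B h \<inter> {x. \<not> mn_cocycle_sum n x})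
      \<union> (odometer ^^ n) ` (slice B (\<not> h) \<inter> {x. mn_cocycle_sum n x})"
  then obtain x g where "(x, g) \<in> B" "(mathew_nadkarni ^^ n) (x, g) = (z, h)"
    unfolding slice_def funpow_mathew_nadkarni by auto
  then show "z \<in> slice ((mathew_nadkarni ^^ n) ` B) h"
    unfolding slice_def by (metis image_eqI vimageI)
qed

lemma funpow_mathew_nadkarni_image_measurable:
  assumes B: "B \<in> sets mn_measure"
  shows "(mathew_nadkarni ^^ n) ` B \<in> sets mn_measure"
proof -
  have sub: "B \<subseteq> {0..<1} \<times> UNIV" and slice: "\<And>g. slice B g \<in> sets borel" "\<And>g. slice B g \<subseteq> {0..<1}"
    using B unfolding sets_mn_measure_iff slice_def by auto
  have "(mathew_nadkarni ^^ n) ` B \<subseteq> {0..<1} \<times> UNIV"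
    using sub funpow_odometer_in_unit by (auto simp: funpow_mathew_nadkarni)
  moreover have "(odometer ^^ n) ` (slice B g \<inter> {x. P x}) \<in> sets borel"
    if [measurable]: "P \<in> borel \<rightarrow>\<^sub>M count_space UNIV" for g P
    using slice by (intro conjunct1[OF funpow_odometer_image_lborel]) auto
  ultimately show ?thesis
    unfolding sets_mn_measure_iff slice_funpow_mathew_nadkarni_image by auto
qed

lemma mn_return_lower_bound:
  assumes B: "B \<in> sets mn_measure"
  shows "ennreal (1/2) * emeasure lborel ((odometer ^^ 2 ^ N) ` (slice B False \<inter> mn_fiber_fixed N) \<inter> slice B False)
      + ennreal (1/2) * emeasure lborel ((odometer ^^ 2 ^ N) ` (slice B True \<inter> mn_fiber_fixed N) \<inter> slice B True)
    \<le> emeasure mn_measure ((mathew_nadkarni ^^ 2 ^ N) ` B \<inter> B)"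
proof -
  let ?F = "(mathew_nadkarni ^^ 2 ^ N) ` B \<inter> B"
  have F: "?F \<in> sets mn_measure" using funpow_mathew_nadkarni_image_measurable[OF B] B by auto
  have "emeasure lborel ((odometer ^^ 2 ^ N) ` (slice B h \<inter> mn_fiber_fixed N) \<inter> slice B h)
      \<le> emeasure lborel (slice ?F h)" for h
  proof (rule emeasure_mono)
    show "(odometer ^^ 2 ^ N) ` (slice B h \<inter> mn_fiber_fixed N) \<inter> slice B h \<subseteq> slice ?F h"
      unfolding slice_def[of ?F] vimage_Int slice_def[of "(mathew_nadkarni ^^ 2 ^ N) ` B", symmetric]
        slice_funpow_mathew_nadkarni_image mn_fiber_fixed_def by (auto simp: slice_def)
    show "slice ?F h \<in> sets lborel" using F unfolding sets_mn_measure_iff by simp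
  qed
  then show ?thesis unfolding emeasure_mn_measure[OF F] by (intro add_mono mult_left_mono) auto
qed

lemma eventually_mn_return:
  assumes B: "B \<in> sets mn_measure" and e: "0 < e"
  shows "\<forall>\<^sub>F k in sequentially. ennreal (1/2) * emeasure mn_measure B
    \<le> emeasure mn_measure ((mathew_nadkarni ^^ 2 ^ Suc k) ` B \<inter> B) + ennreal e"
proof -
  have slice: "slice B g \<in> sets borel" "slice B g \<subseteq> {0..<1}" for g
    using B unfolding sets_mn_measure_iff slice_def by auto
  let ?u = "\<lambda>k g. emeasure lborel ((odometer ^^ 2 ^ Suc k) ` (slice B g \<inter> mn_fiber_fixed (Suc k)) \<inter> slice B g)"
  have "ennreal (1/2) + ennreal (1/2) = 1" using ennreal_plus[of "1/2" "1/2"] by simp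
  then have half: "ennreal (1/2) * x + ennreal (1/2) * x = x" for x :: ennreal
    by (metis distrib_right mult_1)
  have "\<forall>\<^sub>F k in sequentially. \<forall>g. ennreal (1/2) * emeasure lborel (slice B g) \<le> ?u k g + ennreal e"
    using eventually_conj[OF eventually_half_return[OF slice e, of False] eventually_half_return[OF slice e, of True]]
    by eventually_elim (simp add: all_bool_eq)
  then show ?thesis
  proof eventually_elim
    case (elim k)
    have "ennreal (1/2) * emeasure mn_measure B
        = ennreal (1/2) * (ennreal (1/2) * emeasure lborel (slice B False))
          + ennreal (1/2) * (ennreal (1/2) * emeasure lborel (slice B True))"
      unfolding emeasure_mn_measure[OF B] by (simp add: distrib_left)
    also have "\<dots> \<le> ennreal (1/2) * (?u k False + ennreal e) + ennreal (1/2) * (?u k True + ennreal e)"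
      using elim by (intro add_mono mult_left_mono) auto
    also have "\<dots> = (ennreal (1/2) * ?u k False + ennreal (1/2) * ?u k True)
        + (ennreal (1/2) * ennreal e + ennreal (1/2) * ennreal e)"
      by (simp only: distrib_left add_ac)
    also have "\<dots> \<le> emeasure mn_measure ((mathew_nadkarni ^^ 2 ^ Suc k) ` B \<inter> B) + ennreal e"
      unfolding half by (rule add_right_mono[OF mn_return_lower_bound[OF B]])
    finally show ?case .
  qed
qed

theorem mainTheorem5:
  shows "\<exists>n :: nat \<Rightarrow> nat. filterlim n at_top sequentially \<and>
    (\<forall>B \<in> sets mn_measure.
       liminf (\<lambda>k. emeasure mn_measure ((mathew_nadkarni ^^ n k) ` B \<inter> B))
         \<ge> ennreal (1/2) * emeasure mn_measure B)"
proof (intro exI conjI ballI)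
  show "filterlim (\<lambda>k::nat. (2::nat) ^ Suc k) at_top sequentially"
    by (rule filterlim_subseq) (auto intro!: strict_monoI power_strict_increasing)
next
  fix B assume B: "B \<in> sets mn_measure"
  let ?f = "\<lambda>k. emeasure mn_measure ((mathew_nadkarni ^^ 2 ^ Suc k) ` B \<inter> B)"
  show "ennreal (1/2) * emeasure mn_measure B \<le> liminf ?f"
  proof (rule ennreal_le_epsilon)
    fix e :: real assume "0 < e"
    have "\<forall>\<^sub>F k in sequentially. ennreal (1/2) * emeasure mn_measure B - ennreal e \<le> ?f k"
      using eventually_mn_return[OF B \<open>0 < e\<close>]
      by eventually_elim (simp add: ennreal_minus_le_iff add.commute)
    then have "ennreal (1/2) * emeasure mn_measure B - ennreal e \<le> liminf ?f"
      by (rule Liminf_bounded)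
    then show "ennreal (1/2) * emeasure mn_measure B \<le> liminf ?f + ennreal e"
      by (simp add: ennreal_minus_le_iff add.commute)
  qed
qed

end
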